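(* Let $x_1\in\mathbb{R}$, $x_2\in\mathbb{R}\cup\{+\infty\}$ with $x_1<x_2$, let $D=[x_1,x_2)$, and let $f:D\to\mathbb{R}$ be ordinal decreasing with $f(x)>0$ for all $x\in D$. Define points $p_\alpha$ for ordinals $\alpha$ by $p_0=x_1$, $p_{\alpha+1}=\max\{y\le x_2:\ x-f(x)<p_\alpha\text{ for all }x\in D\text{ with }x<y\}$, and $p_\alpha=\sup_{\beta<\alpha}p_\beta$ for limit $\alpha$, and define intervals $I_\alpha=[p_\alpha,p_{\alpha+1})$. These intervals partition $D$, and the ordinal number of (nonempty) intervals $I_\alpha$ in this partition is at most $\omega\cdot(o(f|_D)+1)$.
   Context: For $h:E\to\mathbb{R}$, a strictly decreasing sequence $x_1>x_2>\cdots$ in $E$ is $h$-bad if $h(x_1)>h(x_2)>\cdots$; $h$ is ordinal decreasing if there is no infinite $h$-bad sequence. For ordinal decreasing $h$, the tree $T_h$ has a vertex for each finite $h$-bad sequence (the empty sequence being the root), the parent of $\langle x_1>\cdots>x_n\rangle$ being $\langle x_1>\cdots>x_{n-1}\rangle$; each vertex gets the ordinal height $o(v)=\sup_{w\text{ child of }v}(o(w)+1)$, and $o(h)$ is the height of the root. $o(f|_D)$ is the ordinal type of the restriction of $f$ to $D$. Maxima/suprema are taken in $\mathbb{R}\cup\{+\infty\}$. *)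

theory Defs
  imports "HOL-Analysis.Analysis"
begin

definition bad_list :: "(real \<Rightarrow> real) \<Rightarrow> real set \<Rightarrow> real list \<Rightarrow> bool" where
  "bad_list h E xs \<longleftrightarrow> set xs \<subseteq> E \<and> sorted_wrt (\<lambda>a b. a > b) xs
      \<and> sorted_wrt (\<lambda>a b. h a > h b) xs"

definition ordinal_decreasing :: "(real \<Rightarrow> real) \<Rightarrow> real set \<Rightarrow> bool" where
  "ordinal_decreasing h E \<longleftrightarrow>
     \<not> (\<exists>s::nat \<Rightarrow> real. \<forall>n. s n \<in> E \<and> s (Suc n) < s n \<and> h (s (Suc n)) < h (s n))"

text \<open>Comparison of ordinal heights of vertices of T_h (vertices = finite bad lists,
  children of u are the bad lists u @ [x]).  Since
  o(v) = sup_{w child of v} (o(w)+1), one has o(u) \<le> o(v) iff every child u' of u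
  has o(u') < o(v), i.e. iff every child u' of u has o(u') \<le> o(v') for some child v'
  of v.  For ordinal decreasing h (T_h well-founded) the least relation closed under
  this rule is exactly the relation o(u) \<le> o(v).\<close>
inductive ht_le :: "(real \<Rightarrow> real) \<Rightarrow> real set \<Rightarrow> real list \<Rightarrow> real list \<Rightarrow> bool"
  for h E where
  "bad_list h E u \<Longrightarrow> bad_list h E v \<Longrightarrow>
   (\<forall>x. bad_list h E (u @ [x]) \<longrightarrow>
        (\<exists>y. bad_list h E (v @ [y]) \<and> ht_le h E (u @ [x]) (v @ [y])))
   \<Longrightarrow> ht_le h E u v"

text \<open>o(u) < o(v) iff o(u) \<le> o(w) for some child w of v.\<close>
definition ht_less :: "(real \<Rightarrow> real) \<Rightarrow> real set \<Rightarrow> real list \<Rightarrow> real list \<Rightarrow> bool" where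
  "ht_less h E u v \<longleftrightarrow> (\<exists>y. bad_list h E (v @ [y]) \<and> ht_le h E u (v @ [y]))"

text \<open>The class of vertices with the same height as v (represents the ordinal o(v)).\<close>
definition rank_class :: "(real \<Rightarrow> real) \<Rightarrow> real set \<Rightarrow> real list \<Rightarrow> real list set" where
  "rank_class h E v = {u. bad_list h E u \<and> ht_le h E u v \<and> ht_le h E v u}"

text \<open>The ordinal o(h) (height of the root []), as a well-order: the ordinals o(v) < o([])
  (every ordinal below the height of the root is the height of some vertex), ordered
  by size.\<close>
definition ord_height :: "(real \<Rightarrow> real) \<Rightarrow> real set \<Rightarrow> real list set rel" where
  "ord_height h E = {(rank_class h E u, rank_class h E v) | u v.
      bad_list h E u \<and> bad_list h E v \<and> ht_less h E u [] \<and> ht_less h E v []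
      \<and> ht_le h E u v}"

text \<open>Successor ordinal r + 1: add a new top element.\<close>
definition ord_succ :: "'a rel \<Rightarrow> 'a option rel" where
  "ord_succ r = {(Some a, Some b) | a b. (a, b) \<in> r}
      \<union> {(a, None) | a. a = None \<or> (\<exists>b \<in> Field r. a = Some b)}"

text \<open>The ordinal product omega * r: r copies of omega, ordered lexicographically
  with the r-coordinate most significant.\<close>
definition omega_times :: "'a rel \<Rightarrow> ('a \<times> nat) rel" where
  "omega_times r = {((a, m), (b, n)) | a b m n. a \<in> Field r \<and> b \<in> Field r \<and>
      (((a, b) \<in> r \<and> a \<noteq> b) \<or> (a = b \<and> m \<le> n))}"

definition next_pt :: "(real \<Rightarrow> real) \<Rightarrow> real set \<Rightarrow> ereal \<Rightarrow> ereal \<Rightarrow> ereal" where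
  "next_pt f D x2 p = (GREATEST y. y \<le> x2 \<and>
      (\<forall>x\<in>D. ereal x < y \<longrightarrow> ereal (x - f x) < p))"

text \<open>The set of all points p_alpha (alpha ranging over all ordinals): the transfinite
  iteration of next_pt starting at x1, taking suprema at limit stages.  Since the
  p_alpha form a nondecreasing transfinite sequence, this is exactly the least set
  containing x1 and closed under next_pt and under suprema of nonempty subsets.\<close>
inductive_set pts :: "(real \<Rightarrow> real) \<Rightarrow> real set \<Rightarrow> real \<Rightarrow> ereal \<Rightarrow> ereal set"
  for f D x1 x2 where
  base: "ereal x1 \<in> pts f D x1 x2"
| succ: "p \<in> pts f D x1 x2 \<Longrightarrow> next_pt f D x2 p \<in> pts f D x1 x2"
| lim: "(\<forall>a\<in>A. a \<in> pts f D x1 x2) \<Longrightarrow> A \<noteq> {} \<Longrightarrow> Sup A \<in> pts f D x1 x2"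

definition interval_at :: "(real \<Rightarrow> real) \<Rightarrow> real set \<Rightarrow> ereal \<Rightarrow> ereal \<Rightarrow> real set" where
  "interval_at f D x2 p = {x. p \<le> ereal x \<and> ereal x < next_pt f D x2 p}"

end

theory Submission
  imports Defs
begin

(*
  The points p_alpha form the tower generated from x1 by nxt (p_alpha to p_(alpha+1)) and by
  suprema.  Since nxt is inflationary, such a tower is well ordered and satisfies
  "p < c implies nxt p <= c"; hence the intervals [p, nxt p) are pairwise disjoint, and they
  cover D because p < nxt p whenever p < x2.  The last fact is the first use of ordinal
  decreasingness: if nxt r <= r, the points x > r with f x <= x - r accumulate at r and
  contain an infinite f-bad sequence.

  For the bound, write each point as nxt^k (base p), with base p the least point of the tower
  whose orbit reaches p (alpha = omega * beta + k), and code p by k together with the least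
  height o([y]) over y >= base p.  If base p < base p' <= y', the orbit of base p stays below
  y' and converges, so two consecutive steps late in the orbit leave a point x in
  [base p, y') with f x < f y'.  Then [y', x] is bad and o([x]) <= o([y', x]) < o([y']), so
  the codes increase strictly in the lexicographic order omega * (o(f) + 1).
*)

section \<open>Well-orders\<close>

lemma Well_orderI:
  assumes "\<And>a. a \<in> Field r \<Longrightarrow> (a, a) \<in> r"
    and "\<And>a b c. (a, b) \<in> r \<Longrightarrow> (b, c) \<in> r \<Longrightarrow> (a, c) \<in> r"
    and "\<And>a b. (a, b) \<in> r \<Longrightarrow> (b, a) \<in> r \<Longrightarrow> a = b"
    and "\<And>a b. a \<in> Field r \<Longrightarrow> b \<in> Field r \<Longrightarrow> (a, b) \<in> r \<or> (b, a) \<in> r"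
    and "\<And>A. A \<subseteq> Field r \<Longrightarrow> A \<noteq> {} \<Longrightarrow> \<exists>a\<in>A. \<forall>a'\<in>A. (a, a') \<in> r"
  shows "Well_order r"
proof -
  have "Linear_order r"
    unfolding linear_order_on_def partial_order_on_def preorder_on_def
    using assms(1-4) by (auto simp: refl_on_def Field_def trans_def antisym_def total_on_def)
  then show ?thesis
    using assms(5) Linear_order_Well_order_iff by blast
qed

lemma in_ord_succ_iff:
  "(x, y) \<in> ord_succ r \<longleftrightarrow> (\<exists>a b. x = Some a \<and> y = Some b \<and> (a, b) \<in> r)
     \<or> (y = None \<and> (x = None \<or> (\<exists>a\<in>Field r. x = Some a)))"
  by (auto simp: ord_succ_def)

lemma Field_ord_succ: "Field (ord_succ r) = insert None (Some ` Field r)"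
proof
  show "Field (ord_succ r) \<subseteq> insert None (Some ` Field r)"
    by (auto simp: Field_def ord_succ_def)
  show "insert None (Some ` Field r) \<subseteq> Field (ord_succ r)"
    by (force intro: FieldI1[of _ None] simp: in_ord_succ_iff)
qed

lemma Well_order_ord_succ:
  assumes "Well_order r"
  shows "Well_order (ord_succ r)"
proof -
  interpret wo_rel r using assms by (simp add: wo_rel_def)
  show ?thesis
  proof (rule Well_orderI)
    fix a assume "a \<in> Field (ord_succ r)"
    then show "(a, a) \<in> ord_succ r"
      using REFL by (auto simp: Field_ord_succ in_ord_succ_iff refl_on_def)
  next
    fix a b c assume ab: "(a, b) \<in> ord_succ r" and bc: "(b, c) \<in> ord_succ r"
    show "(a, c) \<in> ord_succ r"
    proof (cases c)
      case None
      with ab show ?thesis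
        unfolding in_ord_succ_iff by (blast intro: FieldI1)
    next
      case (Some z)
      with ab bc obtain x y where "a = Some x" "b = Some y" "(x, y) \<in> r" "(y, z) \<in> r"
        unfolding in_ord_succ_iff by blast
      with Some show ?thesis
        unfolding in_ord_succ_iff using transD[OF TRANS] by blast
    qed
  next
    fix a b assume "(a, b) \<in> ord_succ r" "(b, a) \<in> ord_succ r"
    then show "a = b"
      unfolding in_ord_succ_iff using antisymD[OF ANTISYM] by blast
  next
    fix a b assume "a \<in> Field (ord_succ r)" "b \<in> Field (ord_succ r)"
    then show "(a, b) \<in> ord_succ r \<or> (b, a) \<in> ord_succ r"
      unfolding Field_ord_succ in_ord_succ_iff using TOTALS by blast
  next
    fix A assume A: "A \<subseteq> Field (ord_succ r)" "A \<noteq> {}"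
    show "\<exists>a\<in>A. \<forall>a'\<in>A. (a, a') \<in> ord_succ r"
    proof (cases "A = {None}")
      case True
      then show ?thesis by (simp add: in_ord_succ_iff)
    next
      case False
      define B where "B = {b. Some b \<in> A}"
      have B: "B \<subseteq> Field r" "B \<noteq> {}"
        using A False by (auto simp: B_def Field_ord_succ)
      have "(Some (minim B), a') \<in> ord_succ r" if "a' \<in> A" for a'
      proof (cases a')
        case None
        then show ?thesis using minim_inField[OF B] by (simp add: in_ord_succ_iff)
      next
        case (Some b)
        then show ?thesis using that minim_least[OF B(1)] by (simp add: in_ord_succ_iff B_def)
      qed
      moreover have "Some (minim B) \<in> A"
        using minim_in[OF B] by (simp add: B_def)
      ultimately show ?thesis by blast
    qed
  qed
qed

lemma in_omega_times_iff:
  "((a, m), (b, n)) \<in> omega_times r \<longleftrightarrow>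
     a \<in> Field r \<and> b \<in> Field r \<and> ((a, b) \<in> r \<and> a \<noteq> b \<or> a = b \<and> m \<le> n)"
  by (auto simp: omega_times_def)

lemma Field_omega_times: "Field (omega_times r) = Field r \<times> UNIV"
proof
  show "Field (omega_times r) \<subseteq> Field r \<times> UNIV"
    by (auto simp: Field_def omega_times_def)
  show "Field r \<times> UNIV \<subseteq> Field (omega_times r)"
    by (force intro: FieldI1[of "(a, m)" "(a, m)" for a m] simp: in_omega_times_iff)
qed

lemma Well_order_omega_times:
  assumes "Well_order r"
  shows "Well_order (omega_times r)"
proof -
  interpret wo_rel r using assms by (simp add: wo_rel_def)
  show ?thesis
  proof (rule Well_orderI)
    fix x assume "x \<in> Field (omega_times r)"
    then show "(x, x) \<in> omega_times r"
      by (cases x) (simp add: Field_omega_times in_omega_times_iff)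
  next
    fix x y z assume xy: "(x, y) \<in> omega_times r" and yz: "(y, z) \<in> omega_times r"
    obtain a m b n c k where abc: "x = (a, m)" "y = (b, n)" "z = (c, k)"
      by (metis prod.exhaust)
    have "(a, c) \<in> r \<and> a \<noteq> c \<or> a = c \<and> m \<le> k"
    proof (cases "a = b \<or> b = c")
      case True
      then show ?thesis using xy yz abc by (auto simp: in_omega_times_iff)
    next
      case False
      then have "(a, b) \<in> r" "(b, c) \<in> r"
        using xy yz abc by (simp_all add: in_omega_times_iff)
      then show ?thesis
        using False transD[OF TRANS] antisymD[OF ANTISYM] by blast
    qed
    then show "(x, z) \<in> omega_times r"
      using xy yz abc by (simp add: in_omega_times_iff)
  next
    fix x y assume "(x, y) \<in> omega_times r" "(y, x) \<in> omega_times r"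
    then show "x = y"
      using antisymD[OF ANTISYM] by (cases x; cases y) (auto simp: in_omega_times_iff)
  next
    fix x y assume "x \<in> Field (omega_times r)" "y \<in> Field (omega_times r)"
    then show "(x, y) \<in> omega_times r \<or> (y, x) \<in> omega_times r"
      using TOTALS by (cases x; cases y) (auto simp: in_omega_times_iff Field_omega_times)
  next
    fix A assume A: "A \<subseteq> Field (omega_times r)" "A \<noteq> {}"
    have B: "fst ` A \<subseteq> Field r" "fst ` A \<noteq> {}"
      using A by (auto simp: Field_omega_times)
    define a where "a = minim (fst ` A)"
    define m where "m = (LEAST m. (a, m) \<in> A)"
    have "a \<in> fst ` A"
      unfolding a_def using minim_in[OF B] .
    then have am: "(a, m) \<in> A"
      unfolding m_def by (force intro: LeastI)
    have "((a, m), (b, n)) \<in> omega_times r" if "(b, n) \<in> A" for b n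
    proof -
      have "(a, b) \<in> r" "b \<in> Field r"
        using that B(1) minim_least[OF B(1), of b] by (force simp: a_def)+
      moreover have "a = b \<Longrightarrow> m \<le> n"
        using that by (simp add: m_def Least_le)
      ultimately show ?thesis
        using am A(1) by (auto simp: in_omega_times_iff Field_omega_times)
    qed
    then show "\<exists>x\<in>A. \<forall>y\<in>A. (x, y) \<in> omega_times r"
      using am by fast
  qed
qed

lemma (in wo_rel) strict_mono_self_le:
  assumes maps: "\<And>a. a \<in> Field r \<Longrightarrow> g a \<in> Field r"
    and strict_mono: "\<And>a b. (a, b) \<in> r \<Longrightarrow> a \<noteq> b \<Longrightarrow> (g a, g b) \<in> r \<and> g a \<noteq> g b"
  shows "a \<in> Field r \<Longrightarrow> (a, g a) \<in> r"
proof (induction a rule: well_order_induct)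
  case (1 a)
  show ?case
  proof (rule ccontr)
    assume "(a, g a) \<notin> r"
    then have below: "(g a, a) \<in> r" "g a \<noteq> a"
      using TOTALS maps[OF 1(2)] 1(2) REFL by (auto simp: refl_on_def)
    then have "(g a, g (g a)) \<in> r"
      using 1 maps by blast
    moreover have "(g (g a), g a) \<in> r" "g (g a) \<noteq> g a"
      using strict_mono[OF below] by auto
    ultimately show False
      using antisymD[OF ANTISYM] by blast
  qed
qed

lemma ordLeq_if_strict_mono:
  assumes r: "Well_order r" and r': "Well_order r'"
    and maps: "\<And>a. a \<in> Field r \<Longrightarrow> g a \<in> Field r'"
    and strict_mono: "\<And>a b. (a, b) \<in> r \<Longrightarrow> a \<noteq> b \<Longrightarrow> (g a, g b) \<in> r' \<and> g a \<noteq> g b"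
  shows "(r, r') \<in> ordLeq"
proof (rule ccontr)
  (* Otherwise r' is isomorphic to an initial segment underS r a, and composing g with the
     isomorphism gives a strictly increasing self-map of r that sends a below a. *)
  have wo: "wo_rel r" using r by (simp add: wo_rel_def)
  assume "(r, r') \<notin> ordLeq"
  then have "(r', r) \<in> ordLess"
    using not_ordLeq_iff_ordLess[OF r' r] by blast
  then obtain a k where a: "a \<in> Field r" and k: "iso r' (Restr r (underS r a)) k"
    using ordLess_iff_ordIso_Restr[OF r r'] unfolding ordIso_def by blast
  let ?m = "k \<circ> g"
  have k_maps: "k b \<in> underS r a" if "b \<in> Field r'" for b
    using iso_Field[OF k] that Field_Restr_subset[of r "underS r a"] by blast
  have m_maps: "?m b \<in> Field r" if "b \<in> Field r" for b
    using k_maps[OF maps[OF that]] Order_Relation.underS_Field by fastforce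
  have "(?m b, ?m c) \<in> r \<and> ?m b \<noteq> ?m c" if "(b, c) \<in> r" "b \<noteq> c" for b c
  proof -
    have gbc: "g b \<in> Field r'" "g c \<in> Field r'" "(g b, g c) \<in> r'" "g b \<noteq> g c"
      using maps strict_mono[OF that] that by (blast intro: FieldI1 FieldI2)+
    then have "(k (g b), k (g c)) \<in> Restr r (underS r a)"
      using k unfolding iso_iff2 by blast
    moreover have "k (g b) \<noteq> k (g c)"
      using gbc inj_onD[OF iso_imp_inj_on[OF k]] by blast
    ultimately show ?thesis by simp
  qed
  then have "(a, ?m a) \<in> r"
    using wo_rel.strict_mono_self_le[OF wo, of ?m a] a m_maps by blast
  moreover have "(?m a, a) \<in> r" "?m a \<noteq> a"
    using k_maps[OF maps[OF a]] by (simp_all add: underS_def)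
  ultimately show False
    using antisymD[OF wo_rel.ANTISYM[OF wo]] by blast
qed

lemma Field_Restr_le: "Field (Restr {(x, y). x \<le> y} A) = (A :: 'a :: preorder set)"
  by (auto simp: Field_def)

section \<open>Heights of vertices of the tree of bad sequences\<close>

lemma bad_list_snoc_iff:
  "bad_list h E (u @ [x]) \<longleftrightarrow> bad_list h E u \<and> x \<in> E \<and> (\<forall>a\<in>set u. x < a \<and> h x < h a)"
  unfolding bad_list_def by (auto simp: sorted_wrt_append)

lemma bad_list_snoc_last_iff:
  assumes "u \<noteq> []"
  shows "bad_list h E (u @ [x]) \<longleftrightarrow> bad_list h E u \<and> x \<in> E \<and> x < last u \<and> h x < h (last u)"
proof -
  obtain v l where u: "u = v @ [l]"
    using assms by (metis append_butlast_last_id)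
  show ?thesis
    unfolding u bad_list_def by (auto simp: sorted_wrt_append)
qed

definition child_rel :: "(real \<Rightarrow> real) \<Rightarrow> real set \<Rightarrow> (real list \<times> real list) set" where
  "child_rel h E = {(u @ [x], u) | u x. bad_list h E (u @ [x])}"

lemma wf_child_rel:
  assumes "ordinal_decreasing h E"
  shows "wf (child_rel h E)"
proof (rule ccontr)
  assume "\<not> wf (child_rel h E)"
  then obtain us where "\<And>i. (us (Suc i), us i) \<in> child_rel h E"
    unfolding wf_iff_no_infinite_down_chain by blast
  then obtain s where s: "\<And>i. us (Suc i) = us i @ [s i]" "\<And>i. bad_list h E (us i @ [s i])"
    unfolding child_rel_def by simp metis
  have "s i \<in> E \<and> s (Suc i) < s i \<and> h (s (Suc i)) < h (s i)" for i
    using s(2)[of "Suc i"] unfolding s(1) bad_list_snoc_iff by simp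
  then show False
    using assms unfolding ordinal_decreasing_def by blast
qed

locale bad_tree =
  fixes h :: "real \<Rightarrow> real" and E :: "real set"
  assumes ordinal_decreasing: "ordinal_decreasing h E"
begin

lemmas wf_child = wf_child_rel[OF ordinal_decreasing]

lemma child_relI: "bad_list h E (u @ [x]) \<Longrightarrow> (u @ [x], u) \<in> child_rel h E"
  unfolding child_rel_def by blast

lemma ht_le_iff:
  "ht_le h E u v \<longleftrightarrow> bad_list h E u \<and> bad_list h E v \<and>
     (\<forall>x. bad_list h E (u @ [x]) \<longrightarrow> (\<exists>y. bad_list h E (v @ [y]) \<and> ht_le h E (u @ [x]) (v @ [y])))"
  by (subst ht_le.simps) blast

lemma ht_le_bad: "ht_le h E u v \<Longrightarrow> bad_list h E u \<and> bad_list h E v"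
  using ht_le_iff by blast

lemma ht_le_refl: "bad_list h E u \<Longrightarrow> ht_le h E u u"
proof (induction u rule: wf_induct_rule[OF wf_child])
  case (1 u)
  then show ?case
    using child_relI by (subst ht_le_iff) blast
qed

lemma ht_le_trans: "ht_le h E u v \<Longrightarrow> ht_le h E v w \<Longrightarrow> ht_le h E u w"
proof (induction arbitrary: w rule: ht_le.induct)
  case (1 u v)
  have "\<exists>z. bad_list h E (w @ [z]) \<and> ht_le h E (u @ [x]) (w @ [z])"
    if u_x: "bad_list h E (u @ [x])" for x
  proof -
    obtain y where y: "bad_list h E (v @ [y])"
      "\<And>w. ht_le h E (v @ [y]) w \<Longrightarrow> ht_le h E (u @ [x]) w"
      using 1(3) u_x by blast
    obtain z where "bad_list h E (w @ [z])" "ht_le h E (v @ [y]) (w @ [z])"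
      using y(1) 1(4) ht_le_iff by blast
    then show ?thesis
      using y(2) by blast
  qed
  then show ?case
    using 1(1) 1(4) ht_le_bad by (subst ht_le_iff) blast
qed

lemma ht_le_total: "bad_list h E u \<Longrightarrow> bad_list h E v \<Longrightarrow> ht_le h E u v \<or> ht_le h E v u"
proof (induction u arbitrary: v rule: wf_induct_rule[OF wf_child])
  case (1 u)
  show ?case
  proof (rule ccontr)
    assume neither: "\<not> (ht_le h E u v \<or> ht_le h E v u)"
    then obtain x where x: "bad_list h E (u @ [x])"
      "\<And>y. bad_list h E (v @ [y]) \<Longrightarrow> \<not> ht_le h E (u @ [x]) (v @ [y])"
      using 1(2,3) by (subst (asm) ht_le_iff) blast
    then have "ht_le h E (v @ [y]) (u @ [x])" if "bad_list h E (v @ [y])" for y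
      using 1(1)[OF child_relI[OF x(1)]] that by blast
    then have "ht_le h E v u"
      using 1(2,3) x(1) by (subst ht_le_iff) blast
    then show False
      using neither by blast
  qed
qed

lemma not_ht_le_snoc: "bad_list h E (u @ [x]) \<Longrightarrow> \<not> ht_le h E u (u @ [x])"
proof (induction u arbitrary: x rule: wf_induct_rule[OF wf_child])
  case (1 u x)
  show ?case
  proof
    assume "ht_le h E u (u @ [x])"
    then obtain y where "bad_list h E ((u @ [x]) @ [y])" "ht_le h E (u @ [x]) ((u @ [x]) @ [y])"
      using 1(2) by (subst (asm) ht_le_iff) auto
    then show False
      using 1(1)[OF child_relI[OF 1(2)]] by blast
  qed
qed

lemma ht_less_iff_not_ht_le:
  "bad_list h E u \<Longrightarrow> bad_list h E v \<Longrightarrow> ht_less h E u v \<longleftrightarrow> \<not> ht_le h E v u"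
proof (induction u arbitrary: v rule: wf_induct_rule[OF wf_child])
  case (1 u v)
  show ?case
  proof
    assume "ht_less h E u v"
    then show "\<not> ht_le h E v u"
      unfolding ht_less_def using ht_le_trans not_ht_le_snoc by blast
  next
    assume "\<not> ht_le h E v u"
    then obtain y where y: "bad_list h E (v @ [y])"
      "\<And>x. bad_list h E (u @ [x]) \<Longrightarrow> \<not> ht_le h E (v @ [y]) (u @ [x])"
      using 1(2,3) by (subst (asm) ht_le_iff) blast
    then have "ht_less h E (u @ [x]) (v @ [y])" if "bad_list h E (u @ [x])" for x
      using 1(1)[OF child_relI[OF that]] that by blast
    then have "ht_le h E u (v @ [y])"
      using 1(2) y(1) unfolding ht_less_def by (subst ht_le_iff) blast
    then show "ht_less h E u v"
      using y(1) unfolding ht_less_def by blast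
  qed
qed

lemma wfp_ht_less: "wfP (ht_less h E)"
proof -
  have "Wellfounded.accp (ht_less h E) u" if "ht_le h E u v" for u v
    using that
  proof (induction v arbitrary: u rule: wf_induct_rule[OF wf_child])
    case (1 v u)
    show ?case
    proof (rule accp.intros)
      fix w assume "ht_less h E w u"
      then obtain x where x: "bad_list h E (u @ [x])" "ht_le h E w (u @ [x])"
        unfolding ht_less_def by blast
      then obtain y where "bad_list h E (v @ [y])" "ht_le h E (u @ [x]) (v @ [y])"
        using 1(2) ht_le_iff by blast
      then show "Wellfounded.accp (ht_less h E) w"
        using 1(1)[OF child_relI] ht_le_trans x(2) by blast
    qed
  qed
  then have "Wellfounded.accp (ht_less h E) u" for u
    by (metis accp.intros ht_less_def)
  then show ?thesis
    by (simp add: wfp_iff_accp)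
qed

(* The children of a nonempty bad list are determined by its last entry. *)
lemma ht_le_same_last:
  "bad_list h E u \<Longrightarrow> bad_list h E v \<Longrightarrow> u \<noteq> [] \<Longrightarrow> v \<noteq> [] \<Longrightarrow> last u = last v \<Longrightarrow>
     ht_le h E u v"
proof (induction u arbitrary: v rule: wf_induct_rule[OF wf_child])
  case (1 u v)
  have "bad_list h E (v @ [z]) \<and> ht_le h E (u @ [z]) (v @ [z])" if "bad_list h E (u @ [z])" for z
  proof
    show v_z: "bad_list h E (v @ [z])"
      using that 1(3-6) by (simp add: bad_list_snoc_last_iff)
    show "ht_le h E (u @ [z]) (v @ [z])"
      using 1(1)[OF child_relI[OF that] that v_z] by simp
  qed
  then show ?case
    using 1(2,3) by (subst ht_le_iff) blast
qed

definition below_root :: "real list set" where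
  "below_root = {u. bad_list h E u \<and> ht_less h E u []}"

lemma singleton_below_root:
  assumes "y \<in> E"
  shows "[y] \<in> below_root"
proof -
  have "bad_list h E [y]"
    using assms by (simp add: bad_list_def)
  then show ?thesis
    unfolding below_root_def ht_less_def using ht_le_refl by auto
qed

lemma rank_class_eq_iff:
  "bad_list h E u \<Longrightarrow> bad_list h E v \<Longrightarrow>
     rank_class h E u = rank_class h E v \<longleftrightarrow> ht_le h E u v \<and> ht_le h E v u"
proof
  assume "bad_list h E u" "rank_class h E u = rank_class h E v"
  then have "u \<in> rank_class h E v"
    unfolding rank_class_def using ht_le_refl by auto
  then show "ht_le h E u v \<and> ht_le h E v u"
    unfolding rank_class_def by blast
next
  assume "ht_le h E u v \<and> ht_le h E v u"
  then show "rank_class h E u = rank_class h E v"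
    unfolding rank_class_def using ht_le_trans by blast
qed

lemma in_ord_height_iff:
  assumes "u \<in> below_root" "v \<in> below_root"
  shows "(rank_class h E u, rank_class h E v) \<in> ord_height h E \<longleftrightarrow> ht_le h E u v"
proof
  assume "(rank_class h E u, rank_class h E v) \<in> ord_height h E"
  then obtain u' v' where "bad_list h E u'" "bad_list h E v'" "ht_le h E u' v'"
    "rank_class h E u = rank_class h E u'" "rank_class h E v = rank_class h E v'"
    unfolding ord_height_def by blast
  moreover have "bad_list h E u" "bad_list h E v"
    using assms unfolding below_root_def by blast+
  ultimately have "ht_le h E u u'" "ht_le h E u' v'" "ht_le h E v' v"
    using rank_class_eq_iff by metis+
  then show "ht_le h E u v"
    using ht_le_trans by blast
next
  assume "ht_le h E u v"
  then show "(rank_class h E u, rank_class h E v) \<in> ord_height h E"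
    using assms unfolding ord_height_def below_root_def by blast
qed

lemma Field_ord_height: "Field (ord_height h E) = rank_class h E ` below_root"
proof
  show "Field (ord_height h E) \<subseteq> rank_class h E ` below_root"
    unfolding ord_height_def Field_def below_root_def by blast
  show "rank_class h E ` below_root \<subseteq> Field (ord_height h E)"
  proof
    fix X assume "X \<in> rank_class h E ` below_root"
    then obtain u where "u \<in> below_root" "X = rank_class h E u"
      by blast
    then have "(X, X) \<in> ord_height h E"
      using in_ord_height_iff ht_le_refl unfolding below_root_def by blast
    then show "X \<in> Field (ord_height h E)"
      by (rule FieldI1)
  qed
qed

lemma in_ord_heightE:
  assumes "(X, Y) \<in> ord_height h E"
  obtains u v where "u \<in> below_root" "v \<in> below_root"
    "X = rank_class h E u" "Y = rank_class h E v" "ht_le h E u v"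
  using assms unfolding ord_height_def below_root_def by blast

lemma Well_order_ord_height: "Well_order (ord_height h E)"
proof (rule Well_orderI)
  fix X assume "X \<in> Field (ord_height h E)"
  then obtain u where "u \<in> below_root" "X = rank_class h E u"
    unfolding Field_ord_height by blast
  then show "(X, X) \<in> ord_height h E"
    using in_ord_height_iff ht_le_refl unfolding below_root_def by blast
next
  fix X Y Z assume XY: "(X, Y) \<in> ord_height h E" and YZ: "(Y, Z) \<in> ord_height h E"
  obtain u v where uv: "u \<in> below_root" "v \<in> below_root"
    "X = rank_class h E u" "Y = rank_class h E v" "ht_le h E u v"
    using XY by (rule in_ord_heightE)
  obtain v' w where vw: "v' \<in> below_root" "w \<in> below_root"
    "Y = rank_class h E v'" "Z = rank_class h E w" "ht_le h E v' w"
    using YZ by (rule in_ord_heightE)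
  have "ht_le h E v v'"
    using rank_class_eq_iff uv(2,4) vw(1,3) unfolding below_root_def by blast
  then have "ht_le h E u w"
    using uv(5) vw(5) ht_le_trans by blast
  then show "(X, Z) \<in> ord_height h E"
    using in_ord_height_iff uv(1,3) vw(2,4) by blast
next
  fix X Y assume XY: "(X, Y) \<in> ord_height h E" and YX: "(Y, X) \<in> ord_height h E"
  obtain u v where uv: "u \<in> below_root" "v \<in> below_root"
    "X = rank_class h E u" "Y = rank_class h E v" "ht_le h E u v"
    using XY by (rule in_ord_heightE)
  moreover have "ht_le h E v u"
    using YX in_ord_height_iff uv by blast
  ultimately show "X = Y"
    using rank_class_eq_iff unfolding below_root_def by blast
next
  fix X Y assume "X \<in> Field (ord_height h E)" "Y \<in> Field (ord_height h E)"
  then obtain u v where uv: "u \<in> below_root" "v \<in> below_root"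
    and X: "X = rank_class h E u" and Y: "Y = rank_class h E v"
    unfolding Field_ord_height by blast
  then show "(X, Y) \<in> ord_height h E \<or> (Y, X) \<in> ord_height h E"
    using in_ord_height_iff ht_le_total unfolding below_root_def by blast
next
  fix A assume A: "A \<subseteq> Field (ord_height h E)" "A \<noteq> {}"
  define S where "S = {u \<in> below_root. rank_class h E u \<in> A}"
  have "S \<noteq> {}"
    using A unfolding S_def Field_ord_height by blast
  then obtain u where u: "u \<in> S" and u_min: "\<And>v. v \<in> S \<Longrightarrow> \<not> ht_less h E v u"
    using wfp_ht_less by (metis ex_in_conv wfp_eq_minimal)
  have "(rank_class h E u, Y) \<in> ord_height h E" if Y: "Y \<in> A" for Y
  proof -
    obtain v where v: "v \<in> S" "Y = rank_class h E v"
      using A(1) Y unfolding S_def Field_ord_height by blast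
    then have "ht_le h E u v"
      using u u_min ht_less_iff_not_ht_le unfolding S_def below_root_def by blast
    then show ?thesis
      using in_ord_height_iff u v unfolding S_def by blast
  qed
  then show "\<exists>X\<in>A. \<forall>Y\<in>A. (X, Y) \<in> ord_height h E"
    using u unfolding S_def by blast
qed

end

section \<open>The points p_alpha and the intervals\<close>

lemma ordinal_decreasing_minimal:
  assumes "ordinal_decreasing h E" "S \<subseteq> E" "x \<in> S"
  obtains m where "m \<in> S" "\<And>y. y \<in> S \<Longrightarrow> y < m \<Longrightarrow> h m \<le> h y"
proof -
  define R where "R = {(y, x). x \<in> E \<and> y \<in> E \<and> y < x \<and> h y < h x}"
  have "wf R"
  proof (rule ccontr)
    assume "\<not> wf R"
    then obtain s where "\<And>i. (s (Suc i), s i) \<in> R"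
      unfolding wf_iff_no_infinite_down_chain by blast
    then show False
      using assms(1) unfolding ordinal_decreasing_def R_def by blast
  qed
  then obtain m where m: "m \<in> S" "\<And>y. (y, m) \<in> R \<Longrightarrow> y \<notin> S"
    using wfE_min[OF _ assms(3)] by blast
  have "h m \<le> h y" if "y \<in> S" "y < m" for y
  proof (rule ccontr)
    assume "\<not> h m \<le> h y"
    then have "(y, m) \<in> R"
      using that m(1) assms(2) unfolding R_def by auto
    then show False
      using m(2) that(1) by blast
  qed
  with m(1) show ?thesis
    using that by blast
qed

locale interval_partition = bad_tree f D for f :: "real \<Rightarrow> real" and D :: "real set" +
  fixes x1 :: real and x2 :: ereal
  assumes x1_less_x2: "ereal x1 < x2"
    and D_eq: "D = {x. x1 \<le> x \<and> ereal x < x2}"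
    and f_pos: "\<And>x. x \<in> D \<Longrightarrow> 0 < f x"
begin

abbreviation points :: "ereal set" where
  "points \<equiv> pts f D x1 x2"

abbreviation nxt :: "ereal \<Rightarrow> ereal" where
  "nxt \<equiv> next_pt f D x2"

lemma nxt_is_greatest:
  "nxt p \<le> x2 \<and> (\<forall>x\<in>D. ereal x < nxt p \<longrightarrow> ereal (x - f x) < p) \<and>
   (\<forall>y. y \<le> x2 \<and> (\<forall>x\<in>D. ereal x < y \<longrightarrow> ereal (x - f x) < p) \<longrightarrow> y \<le> nxt p)"
proof -
  define P where "P y \<longleftrightarrow> y \<le> x2 \<and> (\<forall>x\<in>D. ereal x < y \<longrightarrow> ereal (x - f x) < p)" for y
  define s where "s = Sup (Collect P)"
  have "s \<le> x2"
    unfolding s_def by (rule Sup_least) (simp add: P_def)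
  moreover have "ereal (x - f x) < p" if "x \<in> D" "ereal x < s" for x
    using that unfolding s_def less_Sup_iff P_def by blast
  ultimately have P_s: "P s"
    unfolding P_def by blast
  have s_greatest: "y \<le> s" if "P y" for y
    using that unfolding s_def by (simp add: Sup_upper)
  have "nxt p = s"
    unfolding next_pt_def P_def[symmetric] using P_s s_greatest by (blast intro: Greatest_equality)
  with P_s s_greatest show ?thesis
    unfolding P_def by blast
qed

lemma nxt_le_x2: "nxt p \<le> x2"
  using nxt_is_greatest by blast

lemma le_nxtI:
  "y \<le> x2 \<Longrightarrow> (\<And>x. x \<in> D \<Longrightarrow> ereal x < y \<Longrightarrow> ereal (x - f x) < p) \<Longrightarrow> y \<le> nxt p"
  using nxt_is_greatest by blast

lemma le_nxt: "p \<le> x2 \<Longrightarrow> p \<le> nxt p"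
proof (rule le_nxtI)
  fix x assume "x \<in> D" "ereal x < p"
  then show "ereal (x - f x) < p"
    using f_pos[of x] by (simp add: order_less_trans[of _ "ereal x"])
qed

lemma points_bounds: "p \<in> points \<Longrightarrow> ereal x1 \<le> p \<and> p \<le> x2"
proof (induction rule: pts.induct)
  case base
  then show ?case using x1_less_x2 by simp
next
  case (succ p)
  then show ?case using le_nxt[of p] nxt_le_x2[of p] by auto
next
  case (lim A)
  then obtain a where "a \<in> A"
    by blast
  with lim have "ereal x1 \<le> Sup A"
    by (meson Sup_upper order_trans)
  moreover have "Sup A \<le> x2"
    using lim by (meson Sup_least)
  ultimately show ?case
    by blast
qed

lemma points_realE:
  assumes "p \<in> points" "p < x2"
  obtains r where "p = ereal r" "r \<in> D"
  using points_bounds[OF assms(1)] assms(2) unfolding D_eq by (cases p) auto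

lemma close_point_if_nxt_le:
  assumes "nxt (ereal r) \<le> ereal r" "ereal r < x2" "0 < e"
  shows "\<exists>x\<in>D. r < x \<and> x < r + e \<and> f x \<le> x - r"
proof -
  define y where "y = min (ereal (r + e)) x2"
  have "ereal r < y" "y \<le> x2"
    unfolding y_def using assms by auto
  then have "\<not> y \<le> nxt (ereal r)"
    using assms(1) by auto
  then obtain x where "x \<in> D" "ereal x < y" "\<not> ereal (x - f x) < ereal r"
    using le_nxtI[OF \<open>y \<le> x2\<close>] by blast
  then show ?thesis
    using f_pos[of x] unfolding y_def by (intro bexI[of _ x]) auto
qed

lemma less_nxt:
  assumes "ereal r < x2"
  shows "ereal r < nxt (ereal r)"
proof (rule ccontr)
  assume "\<not> ereal r < nxt (ereal r)"
  then have close: "\<exists>x\<in>D. r < x \<and> x < r + e \<and> f x \<le> x - r" if "0 < e" for e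
    using close_point_if_nxt_le[OF _ assms that] by simp
  define S where "S = {x \<in> D. r < x \<and> f x \<le> x - r}"
  have "S \<subseteq> D"
    unfolding S_def by blast
  obtain x0 where "x0 \<in> S"
    using close[of 1] unfolding S_def by auto
  obtain x where x: "x \<in> S" and x_min: "\<And>y. y \<in> S \<Longrightarrow> y < x \<Longrightarrow> f x \<le> f y"
    using ordinal_decreasing_minimal[OF ordinal_decreasing \<open>S \<subseteq> D\<close> \<open>x0 \<in> S\<close>] by blast
  have "0 < min (x - r) (f x)"
    using x f_pos unfolding S_def by auto
  then obtain y where y: "y \<in> D" "r < y" "y < r + min (x - r) (f x)" "f y \<le> y - r"
    using close by blast
  then have "y \<in> S" "y < x" "f y < f x"
    unfolding S_def by auto
  then show False
    using x_min[of y] by simp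
qed

lemma points_less_nxt:
  assumes "p \<in> points" "p < x2"
  shows "p < nxt p"
proof -
  obtain r where "p = ereal r"
    using assms by (rule points_realE)
  then show ?thesis
    using less_nxt assms(2) by simp
qed

lemma points_le_or_nxt_le:
  assumes c: "c \<in> points" and below_c: "\<And>p. p \<in> points \<Longrightarrow> p < c \<Longrightarrow> nxt p \<le> c"
  shows "p \<in> points \<Longrightarrow> p \<le> c \<or> nxt c \<le> p"
proof (induction rule: pts.induct)
  case base
  then show ?case using points_bounds[OF c] by simp
next
  case (succ p)
  have "p \<le> nxt p"
    using le_nxt points_bounds[OF succ(1)] by blast
  then show ?case
    using succ(2) below_c[OF succ(1)] by (metis order.order_iff_strict order_trans)
next
  case (lim A)
  show ?case
  proof (cases "\<forall>a\<in>A. a \<le> c")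
    case True
    then show ?thesis by (simp add: Sup_least)
  next
    case False
    then obtain a where "a \<in> A" "nxt c \<le> a"
      using lim by auto
    then show ?thesis
      by (meson Sup_upper order_trans)
  qed
qed

lemma nxt_le_if_less:
  "c \<in> points \<Longrightarrow> p \<in> points \<Longrightarrow> p < c \<Longrightarrow> nxt p \<le> c"
proof (induction arbitrary: p rule: pts.induct)
  case base
  then show ?case using points_bounds by (simp add: leD)
next
  case (succ c)
  then have "p \<le> c"
    using points_le_or_nxt_le[of c p] by (auto simp: not_le[symmetric])
  moreover have "c \<le> nxt c"
    using le_nxt points_bounds[OF succ(1)] by blast
  ultimately show ?case
    using succ(2)[of p] succ(3) by (metis order.order_iff_strict order_trans)
next
  case (lim A)
  then obtain a where "a \<in> A" "p < a"
    by (auto simp: less_Sup_iff)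
  with lim show ?case
    by (meson Sup_upper order_trans)
qed

lemma Sup_in_points: "A \<subseteq> points \<Longrightarrow> A \<noteq> {} \<Longrightarrow> Sup A \<in> points"
  by (rule pts.lim) auto

lemma points_has_least:
  assumes "S \<subseteq> points" "S \<noteq> {}"
  shows "\<exists>m\<in>S. \<forall>s\<in>S. m \<le> s"
proof -
  define L where "L = {q \<in> points. \<forall>s\<in>S. q \<le> s}"
  have "ereal x1 \<in> L"
    using assms(1) points_bounds pts.base unfolding L_def by blast
  then have m: "Sup L \<in> points"
    using Sup_in_points[of L] unfolding L_def by blast
  have m_le: "Sup L \<le> s" if "s \<in> S" for s
    using that unfolding L_def by (auto intro: Sup_least)
  show ?thesis
  proof (cases "Sup L \<in> S")
    case True
    then show ?thesis using m_le by blast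
  next
    case False
    then have m_less: "Sup L < s" if "s \<in> S" for s
      using m_le[OF that] that by (metis order.not_eq_order_implies_strict)
    have "nxt (Sup L) \<le> s" if "s \<in> S" for s
      using nxt_le_if_less[OF _ m m_less[OF that]] assms(1) that by blast
    then have "nxt (Sup L) \<in> L"
      using pts.succ[OF m] unfolding L_def by blast
    then have "nxt (Sup L) \<le> Sup L"
      by (rule Sup_upper)
    moreover obtain s where "s \<in> S"
      using assms(2) by blast
    then have "Sup L < x2"
      using m_less points_bounds assms(1) by (meson less_le_trans subsetD)
    ultimately show ?thesis
      using points_less_nxt[OF m] by simp
  qed
qed

lemma Well_order_points_le:
  assumes "S \<subseteq> points"
  shows "Well_order (Restr {(p, q). p \<le> q} S)"
proof -
  have Field: "Field (Restr {(p, q). p \<le> q} S) = S"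
    by (auto simp: Field_def)
  show ?thesis
  proof (rule Well_orderI)
    fix A assume A: "A \<subseteq> Field (Restr {(p, q). p \<le> q} S)" "A \<noteq> {}"
    then obtain m where "m \<in> A" "\<forall>s\<in>A. m \<le> s"
      using points_has_least[of A] assms unfolding Field by blast
    then show "\<exists>a\<in>A. \<forall>a'\<in>A. (a, a') \<in> Restr {(p, q). p \<le> q} S"
      using A(1) unfolding Field by blast
  qed (auto simp: Field)
qed

abbreviation interval :: "ereal \<Rightarrow> real set" where
  "interval \<equiv> interval_at f D x2"

lemma Union_intervals: "(\<Union>p\<in>points. interval p) = D"
proof
  show "(\<Union>p\<in>points. interval p) \<subseteq> D"
  proof
    fix x assume "x \<in> (\<Union>p\<in>points. interval p)"
    then obtain p where p: "p \<in> points" "p \<le> ereal x" "ereal x < nxt p"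
      unfolding interval_at_def by blast
    then have "ereal x1 \<le> ereal x" "ereal x < x2"
      using points_bounds[OF p(1)] nxt_le_x2[of p] by (meson order_trans less_le_trans)+
    then show "x \<in> D"
      unfolding D_eq by simp
  qed
next
  show "D \<subseteq> (\<Union>p\<in>points. interval p)"
  proof
    fix x assume x: "x \<in> D"
    define L where "L = {q \<in> points. q \<le> ereal x}"
    have "ereal x1 \<in> L"
      using x pts.base unfolding L_def D_eq by simp
    then have m: "Sup L \<in> points"
      using Sup_in_points[of L] unfolding L_def by blast
    have m_le: "Sup L \<le> ereal x"
      unfolding L_def by (rule Sup_least) simp
    have "ereal x < nxt (Sup L)"
    proof (rule ccontr)
      assume "\<not> ereal x < nxt (Sup L)"
      then have "nxt (Sup L) \<in> L"
        using pts.succ[OF m] unfolding L_def by simp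
      then have "nxt (Sup L) \<le> Sup L"
        by (rule Sup_upper)
      moreover have "Sup L < x2"
        using m_le x unfolding D_eq by (simp add: le_less_trans)
      ultimately show False
        using points_less_nxt[OF m] by simp
    qed
    then have "x \<in> interval (Sup L)"
      unfolding interval_at_def using m_le by simp
    then show "x \<in> (\<Union>p\<in>points. interval p)"
      using m by blast
  qed
qed

lemma intervals_disjoint:
  assumes "p \<in> points" "q \<in> points" "interval p \<inter> interval q \<noteq> {}"
  shows "p = q"
proof -
  obtain x where "p \<le> ereal x" "ereal x < nxt p" "q \<le> ereal x" "ereal x < nxt q"
    using assms(3) unfolding interval_at_def by blast
  then have "\<not> p < q" "\<not> q < p"
    using nxt_le_if_less assms(1,2) by (meson leD le_less_trans)+
  then show ?thesis
    by simp
qed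

lemma interval_nonempty_iff:
  assumes "p \<in> points"
  shows "interval p \<noteq> {} \<longleftrightarrow> p < x2"
proof
  assume "interval p \<noteq> {}"
  then obtain x where "p \<le> ereal x" "ereal x < nxt p"
    unfolding interval_at_def by blast
  then show "p < x2"
    using nxt_le_x2[of p] by (meson le_less_trans less_le_trans)
next
  assume "p < x2"
  moreover obtain r where "p = ereal r"
    using assms \<open>p < x2\<close> by (rule points_realE)
  ultimately have "r \<in> interval p"
    unfolding interval_at_def using points_less_nxt[OF assms] by simp
  then show "interval p \<noteq> {}"
    by blast
qed

section \<open>Counting the intervals\<close>

lemma funpow_nxt_in_points: "q \<in> points \<Longrightarrow> (nxt ^^ k) q \<in> points"
  by (induction k) (auto intro: pts.succ)

lemma funpow_nxt_mono:
  assumes "q \<in> points" "j \<le> k"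
  shows "(nxt ^^ j) q \<le> (nxt ^^ k) q"
proof -
  have "(nxt ^^ n) q \<le> (nxt ^^ Suc n) q" for n
    using le_nxt points_bounds funpow_nxt_in_points[OF assms(1)] by simp
  then show ?thesis
    using lift_Suc_mono_le[of "\<lambda>n. (nxt ^^ n) q"] assms(2) by blast
qed

definition base :: "ereal \<Rightarrow> ereal" where
  "base p = (LEAST q. q \<in> points \<and> (\<exists>k. (nxt ^^ k) q = p))"

lemma base_is_least:
  assumes "p \<in> points"
  shows "base p \<in> points" "\<exists>k. (nxt ^^ k) (base p) = p"
    "\<And>q k. q \<in> points \<Longrightarrow> (nxt ^^ k) q = p \<Longrightarrow> base p \<le> q"
proof -
  define B where "B = {q \<in> points. \<exists>k. (nxt ^^ k) q = p}"
  have "(nxt ^^ 0) p = p"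
    by simp
  then have "p \<in> B"
    unfolding B_def using assms by blast
  moreover have "B \<subseteq> points"
    unfolding B_def by blast
  ultimately obtain m where m: "m \<in> B" "\<forall>q\<in>B. m \<le> q"
    using points_has_least[of B] by blast
  have "base p = m"
    unfolding base_def by (rule Least_equality) (use m in \<open>auto simp: B_def\<close>)
  then show "base p \<in> points" "\<exists>k. (nxt ^^ k) (base p) = p"
    "\<And>q k. q \<in> points \<Longrightarrow> (nxt ^^ k) q = p \<Longrightarrow> base p \<le> q"
    using m unfolding B_def by blast+
qed

lemma base_le: "p \<in> points \<Longrightarrow> base p \<le> p"
  using base_is_least(3)[of p p 0] by simp

lemma funpow_nxt_below_base:
  assumes p: "p \<in> points" and q: "q \<in> points" "q < base p"
  shows "(nxt ^^ n) q < base p"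
proof (induction n)
  case 0
  then show ?case using q by simp
next
  case (Suc n)
  have "(nxt ^^ Suc n) q \<le> base p"
    using nxt_le_if_less base_is_least(1)[OF p] funpow_nxt_in_points[OF q(1)] Suc by simp
  moreover have "(nxt ^^ Suc n) q \<noteq> base p"
  proof
    assume "(nxt ^^ Suc n) q = base p"
    moreover obtain k where "(nxt ^^ k) (base p) = p"
      using base_is_least(2)[OF p] by blast
    ultimately have "(nxt ^^ (k + Suc n)) q = p"
      unfolding funpow_add comp_apply by simp
    then have "base p \<le> q"
      by (rule base_is_least(3)[OF p q(1)])
    then show False
      using q(2) by simp
  qed
  ultimately show ?case
    by simp
qed

lemma base_mono:
  assumes "p \<in> points" "p' \<in> points" "p \<le> p'"
  shows "base p \<le> base p'"
proof (rule ccontr)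
  assume "\<not> base p \<le> base p'"
  then have "base p' < base p"
    by simp
  moreover obtain k where "(nxt ^^ k) (base p') = p'"
    using base_is_least(2)[OF assms(2)] by blast
  ultimately have "p' < base p"
    using funpow_nxt_below_base[OF assms(1) base_is_least(1)[OF assms(2)], of k] by simp
  then show False
    using base_le[OF assms(1)] assms(3) by simp
qed

lemma smaller_value_below_bounded_orbit:
  assumes q: "q \<in> points" and y: "y \<in> D" and below: "\<And>n. (nxt ^^ n) q < ereal y"
  shows "\<exists>x\<in>D. q \<le> ereal x \<and> x < y \<and> f x < f y"
proof -
  define a where "a n = real_of_ereal ((nxt ^^ n) q)" for n
  have orbit_below_x2: "(nxt ^^ n) q < x2" for n
    using below[of n] y unfolding D_eq by (auto intro: less_trans)
  have orbit: "(nxt ^^ n) q = ereal (a n)" for n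
    using funpow_nxt_in_points[OF q] orbit_below_x2 unfolding a_def
    by (metis points_realE real_of_ereal.simps(1))
  have a_less_Suc: "a n < a (Suc n)" for n
    using points_less_nxt[OF funpow_nxt_in_points[OF q] orbit_below_x2, of n] orbit[of n]
      orbit[of "Suc n"] by simp
  have a_less_y: "a n < y" for n
    using below[of n] orbit[of n] by simp
  have "incseq a"
    using a_less_Suc by (auto intro: incseq_SucI less_imp_le)
  moreover have "bdd_above (range a)"
    using a_less_y by (metis bdd_aboveI2 less_imp_le)
  ultimately have "Cauchy a"
    using LIMSEQ_incseq_SUP LIMSEQ_imp_Cauchy by blast
  moreover have "0 < f y"
    using f_pos[OF y] .
  ultimately obtain M where "\<And>m n. M \<le> m \<Longrightarrow> M \<le> n \<Longrightarrow> dist (a m) (a n) < f y"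
    using metric_CauchyD by blast
  from this[of "M + 2" M] have gap: "a (M + 2) - a M < f y"
    by (simp add: dist_real_def)
  have "nxt ((nxt ^^ M) q) < (nxt ^^ (M + 2)) q"
    using a_less_Suc[of "Suc M"] orbit[of "Suc M"] orbit[of "M + 2"] by simp
  then obtain x where x: "x \<in> D" "ereal x < (nxt ^^ (M + 2)) q" "\<not> ereal (x - f x) < (nxt ^^ M) q"
    using le_nxtI[of "(nxt ^^ (M + 2)) q" "(nxt ^^ M) q"] orbit_below_x2[of "M + 2"]
    by (meson leD less_imp_le)
  then have "a M \<le> x - f x" "x < a (M + 2)"
    using orbit[of M] orbit[of "M + 2"] by simp_all
  moreover have "q \<le> ereal (a M)"
    using funpow_nxt_mono[OF q, of 0 M] orbit[of M] by simp
  ultimately show ?thesis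
    using x(1) f_pos[OF x(1)] gap a_less_y[of "M + 2"]
    by (intro bexI[of _ x]) (auto intro: order_trans)
qed

definition min_height :: "ereal \<Rightarrow> real list set" where
  "min_height q = wo_rel.minim (ord_height f D) {rank_class f D [y] | y. y \<in> D \<and> q \<le> ereal y}"

lemma min_height_is_least:
  assumes "q \<in> points" "q < x2"
  shows "min_height q \<in> Field (ord_height f D)"
    and "\<exists>y\<in>D. q \<le> ereal y \<and> min_height q = rank_class f D [y]"
    and "\<And>y. y \<in> D \<Longrightarrow> q \<le> ereal y \<Longrightarrow> (min_height q, rank_class f D [y]) \<in> ord_height f D"
proof -
  let ?Y = "{rank_class f D [y] | y. y \<in> D \<and> q \<le> ereal y}"
  have wo: "wo_rel (ord_height f D)"
    using Well_order_ord_height by (simp add: wo_rel_def)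
  have Y_Field: "?Y \<subseteq> Field (ord_height f D)"
    using singleton_below_root unfolding Field_ord_height by blast
  obtain r where "q = ereal r" "r \<in> D"
    using assms by (rule points_realE)
  then have Y_ne: "?Y \<noteq> {}"
    by force
  show "min_height q \<in> Field (ord_height f D)"
    unfolding min_height_def using wo_rel.minim_inField[OF wo Y_Field Y_ne] .
  show "\<exists>y\<in>D. q \<le> ereal y \<and> min_height q = rank_class f D [y]"
    unfolding min_height_def using wo_rel.minim_in[OF wo Y_Field Y_ne] by blast
  show "(min_height q, rank_class f D [y]) \<in> ord_height f D" if "y \<in> D" "q \<le> ereal y" for y
    unfolding min_height_def using wo_rel.minim_least[OF wo Y_Field] that by blast
qed

lemma min_height_strict_mono:
  assumes q: "q \<in> points" "q < x2" and q': "q' \<in> points" "q' < x2"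
    and orbit_below: "\<And>n. (nxt ^^ n) q < q'"
  shows "(min_height q, min_height q') \<in> ord_height f D \<and> min_height q \<noteq> min_height q'"
proof -
  obtain y0 where y0: "y0 \<in> D" "q \<le> ereal y0" "min_height q = rank_class f D [y0]"
    using min_height_is_least(2)[OF q] by blast
  obtain y' where y': "y' \<in> D" "q' \<le> ereal y'" "min_height q' = rank_class f D [y']"
    using min_height_is_least(2)[OF q'] by blast
  obtain x where x: "x \<in> D" "q \<le> ereal x" "x < y'" "f x < f y'"
    using smaller_value_below_bounded_orbit[OF q(1) y'(1)] orbit_below y'(2)
    by (meson less_le_trans)
  have bad_y'x: "bad_list f D [y', x]"
    using x y' by (simp add: bad_list_def)
  have "[y0] \<in> below_root" "[x] \<in> below_root" "[y'] \<in> below_root"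
    using y0 x y' singleton_below_root by blast+
  then have bad: "bad_list f D [y0]" "bad_list f D [x]" "bad_list f D [y']"
    unfolding below_root_def by blast+
  have "ht_le f D [y0] [x]"
    using min_height_is_least(3)[OF q x(1,2)] y0(3) in_ord_height_iff
      \<open>[y0] \<in> below_root\<close> \<open>[x] \<in> below_root\<close> by simp
  moreover have "ht_le f D [x] [y', x]"
    using ht_le_same_last[OF bad(2) bad_y'x] by simp
  ultimately have "ht_less f D [y0] [y']"
    using bad_y'x ht_le_trans unfolding ht_less_def by fastforce
  then have "ht_le f D [y0] [y']" "\<not> ht_le f D [y'] [y0]"
    using ht_less_iff_not_ht_le[OF bad(1,3)] ht_le_total[OF bad(1,3)] by blast+
  then show ?thesis
    using in_ord_height_iff rank_class_eq_iff bad y0(3) y'(3)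
      \<open>[y0] \<in> below_root\<close> \<open>[y'] \<in> below_root\<close> by simp
qed

definition interval_code :: "ereal \<Rightarrow> real list set option \<times> nat" where
  "interval_code p = (Some (min_height (base p)), LEAST k. (nxt ^^ k) (base p) = p)"

lemma base_below_x2: "p \<in> points \<Longrightarrow> p < x2 \<Longrightarrow> base p < x2"
  using base_le by (rule le_less_trans)

lemma interval_code_strict_mono:
  assumes p: "p \<in> points" and p': "p' \<in> points" "p' < x2" and "p < p'"
  shows "(interval_code p, interval_code p') \<in> omega_times (ord_succ (ord_height f D)) \<and>
    interval_code p \<noteq> interval_code p'"
proof -
  have "p < x2"
    using \<open>p < p'\<close> p'(2) by simp
  then have b: "base p \<in> points" "base p < x2" and b': "base p' \<in> points" "base p' < x2"
    using base_is_least(1) base_below_x2 p p' by blast+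
  define k where "k = (LEAST k. (nxt ^^ k) (base p) = p)"
  define k' where "k' = (LEAST k. (nxt ^^ k) (base p') = p')"
  have k: "(nxt ^^ k) (base p) = p"
    unfolding k_def using base_is_least(2)[OF p] by (rule LeastI_ex)
  have k': "(nxt ^^ k') (base p') = p'"
    unfolding k'_def using base_is_least(2)[OF p'(1)] by (rule LeastI_ex)
  have codes: "interval_code p = (Some (min_height (base p)), k)"
    "interval_code p' = (Some (min_height (base p')), k')"
    unfolding interval_code_def k_def k'_def by simp_all
  have F: "Some (min_height (base p)) \<in> Field (ord_succ (ord_height f D))"
    "Some (min_height (base p')) \<in> Field (ord_succ (ord_height f D))"
    using min_height_is_least(1) b b' by (simp_all add: Field_ord_succ)
  show ?thesis
  proof (cases "base p = base p'")
    case True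
    have "k < k'"
    proof (rule ccontr)
      assume "\<not> k < k'"
      then have "p' \<le> p"
        using funpow_nxt_mono[OF b(1), of k' k] k k' True by simp
      then show False
        using \<open>p < p'\<close> by simp
    qed
    then show ?thesis
      unfolding codes using F True by (simp add: in_omega_times_iff)
  next
    case False
    then have "base p < base p'"
      using base_mono[OF p p'(1)] \<open>p < p'\<close> by (simp add: order.strict_iff_order)
    then have "(nxt ^^ n) (base p) < base p'" for n
      using funpow_nxt_below_base[OF p'(1) b(1)] by blast
    then have "(min_height (base p), min_height (base p')) \<in> ord_height f D"
      "min_height (base p) \<noteq> min_height (base p')"
      using min_height_strict_mono[OF b b'] by blast+
    then show ?thesis
      unfolding codes using F by (simp add: in_omega_times_iff in_ord_succ_iff)
  qed
qed

lemma ordLeq_omega_times: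
  "(Restr {(p, q). p \<le> q} {p \<in> points. interval p \<noteq> {}},
    omega_times (ord_succ (ord_height f D))) \<in> ordLeq"
proof (rule ordLeq_if_strict_mono)
  show "Well_order (Restr {(p, q). p \<le> q} {p \<in> points. interval p \<noteq> {}})"
    by (rule Well_order_points_le) blast
  show "Well_order (omega_times (ord_succ (ord_height f D)))"
    by (intro Well_order_omega_times Well_order_ord_succ Well_order_ord_height)
next
  fix p assume "p \<in> Field (Restr {(p, q). p \<le> q} {p \<in> points. interval p \<noteq> {}})"
  then have p: "p \<in> points" "p < x2"
    using interval_nonempty_iff unfolding Field_Restr_le by blast+
  then have "min_height (base p) \<in> Field (ord_height f D)"
    using min_height_is_least(1) base_is_least(1) base_below_x2 by blast
  then show "interval_code p \<in> Field (omega_times (ord_succ (ord_height f D)))"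
    unfolding interval_code_def by (simp add: Field_omega_times Field_ord_succ)
next
  fix p p' assume "(p, p') \<in> Restr {(p, q). p \<le> q} {p \<in> points. interval p \<noteq> {}}" "p \<noteq> p'"
  then have "p \<in> points" "p' \<in> points" "p' < x2" "p < p'"
    using interval_nonempty_iff by auto
  then show "(interval_code p, interval_code p') \<in> omega_times (ord_succ (ord_height f D)) \<and>
      interval_code p \<noteq> interval_code p'"
    by (rule interval_code_strict_mono)
qed

end

theorem lemma6:
  fixes x1 :: real and x2 :: ereal and f :: "real \<Rightarrow> real" and D :: "real set"
  assumes "ereal x1 < x2"
    and "D = {x. x1 \<le> x \<and> ereal x < x2}"
    and "ordinal_decreasing f D"
    and "\<forall>x\<in>D. f x > 0"
  shows "(\<Union>p\<in>pts f D x1 x2. interval_at f D x2 p) = D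
    \<and> (\<forall>p\<in>pts f D x1 x2. \<forall>q\<in>pts f D x1 x2.
          interval_at f D x2 p \<inter> interval_at f D x2 q \<noteq> {} \<longrightarrow> p = q)
    \<and> (Restr {(p, q). p \<le> q} {p \<in> pts f D x1 x2. interval_at f D x2 p \<noteq> {}},
       omega_times (ord_succ (ord_height f D))) \<in> ordLeq"
proof -
  interpret interval_partition f D x1 x2
    using assms by unfold_locales auto
  show ?thesis
    using Union_intervals intervals_disjoint ordLeq_omega_times by blast
qed

end
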